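(* Let $M=(Q_M,\Sigma,\delta_M,s_M,F_M)$ be a complete DFA with $m\ge 2$ states and $N=(Q_N,\Sigma,\delta_N,s_N,F_N)$ a complete DFA with $n\ge 1$ states over the same alphabet, and suppose $k:=|F_M\setminus\{s_M\}|\ge 1$. Then there exists a complete DFA with at most $(2^{m-1}+2^{m-k-1})\cdot n-n+1$ states that accepts $L(M)^*\cap L(N)$.
   Context: A DFA is a 5-tuple $(Q,\Sigma,\delta,s,F)$ with total transition function $\delta:Q\times\Sigma\to Q$ (complete DFA); $L(M)$ is the accepted language; $L^*$ is the Kleene star of $L$. *)

theory Defs
  imports Main
begin

record ('q, 'a) dfa =
  states :: "'q set"
  alphabet :: "'a set"
  trans :: "'q \<Rightarrow> 'a \<Rightarrow> 'q"
  start :: "'q"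
  final :: "'q set"

definition complete_dfa :: "('q, 'a) dfa \<Rightarrow> bool" where
  "complete_dfa M \<longleftrightarrow>
     finite (states M) \<and> finite (alphabet M) \<and>
     start M \<in> states M \<and> final M \<subseteq> states M \<and>
     (\<forall>q\<in>states M. \<forall>a\<in>alphabet M. trans M q a \<in> states M)"

definition trans_star :: "('q, 'a) dfa \<Rightarrow> 'q \<Rightarrow> 'a list \<Rightarrow> 'q" where
  "trans_star M q w = foldl (trans M) q w"

definition lang :: "('q, 'a) dfa \<Rightarrow> 'a list set" where
  "lang M = {w. w \<in> lists (alphabet M) \<and> trans_star M (start M) w \<in> final M}"

inductive_set kstar :: "'a list set \<Rightarrow> 'a list set" for L where
  kstar_Nil: "[] \<in> kstar L"
| kstar_app: "u \<in> L \<Longrightarrow> v \<in> kstar L \<Longrightarrow> u @ v \<in> kstar L"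

end

theory Submission
  imports Defs
begin

(* The standard subset construction for L(M)^* is run in parallel
   with N.  After reading w, the star component holds the set Sw M w of states that
   M reaches on suffixes v of w whose prefix lies in L(M)^*.  It is updated by
   applying the transition letterwise and adding the start state s whenever a final
   state is hit; a separate initial state (None) handles the empty word.
   Every reachable set S is nonempty and contains s as soon as it meets F.  Such sets
   either contain s (2^(m-1) choices) or avoid s and F (2^(m-1-k) - 1 nonempty
   choices), so the reachable part of the product has at most
   (2^(m-1) + 2^(m-1-k) - 1) * n + 1 states.  Renaming the reachable part by natural
   numbers gives the required DFA. *)

lemma trans_star_Nil [simp]: "trans_star M q [] = q"
  by (simp add: trans_star_def)

lemma trans_star_Cons [simp]: "trans_star M q (a # w) = trans_star M (trans M q a) w"
  by (simp add: trans_star_def)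

lemma trans_star_snoc: "trans_star M q (w @ [a]) = trans M (trans_star M q w) a"
  by (simp add: trans_star_def)

lemma trans_star_in_states:
  "complete_dfa M \<Longrightarrow> q \<in> states M \<Longrightarrow> w \<in> lists (alphabet M) \<Longrightarrow> trans_star M q w \<in> states M"
  by (induction w arbitrary: q) (auto simp: complete_dfa_def)

definition reachable :: "('s, 'a) dfa \<Rightarrow> 's set" where
  "reachable P = (\<lambda>w. trans_star P (start P) w) ` lists (alphabet P)"

lemma start_reachable: "start P \<in> reachable P"
  unfolding reachable_def by (rule image_eqI[of _ _ "[]"]) auto

lemma reachable_closed: "r \<in> reachable P \<Longrightarrow> a \<in> alphabet P \<Longrightarrow> trans P r a \<in> reachable P"
  unfolding reachable_def by (auto simp: trans_star_snoc intro!: image_eqI[of _ _ "_ @ [a]"])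

lemma dfa_restrict_to_nat:
  fixes P :: "('s, 'a) dfa"
  assumes fin_R: "finite R" and start_R: "start P \<in> R"
    and closed_R: "\<forall>r\<in>R. \<forall>a\<in>alphabet P. trans P r a \<in> R"
    and fin_alpha: "finite (alphabet P)"
  shows "\<exists>D :: (nat, 'a) dfa. complete_dfa D \<and> alphabet D = alphabet P \<and>
           card (states D) = card R \<and> lang D = lang P"
proof -
  obtain f where f: "bij_betw f {0..<card R} R"
    using ex_bij_betw_nat_finite[OF fin_R] by blast
  define g where "g = the_inv_into {0..<card R} f"
  have g_range: "g r \<in> {0..<card R}" if "r \<in> R" for r
    using f that unfolding g_def by (meson bij_betw_the_inv_into bij_betwE)
  have f_g: "f (g r) = r" if "r \<in> R" for r
    using f that unfolding g_def by (meson f_the_inv_into_f_bij_betw)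
  have f_range: "f i \<in> R" if "i \<in> {0..<card R}" for i
    using f that by (meson bij_betwE)
  define D :: "(nat, 'a) dfa" where
    "D = \<lparr>states = {0..<card R}, alphabet = alphabet P,
          trans = (\<lambda>i a. g (trans P (f i) a)), start = g (start P),
          final = {i \<in> {0..<card R}. f i \<in> final P}\<rparr>"
  have simulate: "trans_star D (g r) w \<in> {0..<card R} \<and> f (trans_star D (g r) w) = trans_star P r w"
    if "r \<in> R" "w \<in> lists (alphabet P)" for r w
    using that
  proof (induction w arbitrary: r)
    case Nil
    then show ?case using g_range f_g by simp
  next
    case (Cons a w)
    then have "trans P r a \<in> R" using closed_R by auto
    then show ?case using Cons.IH[of "trans P r a"] Cons.prems f_g by (simp add: D_def)
  qed
  have "complete_dfa D"
    unfolding complete_dfa_def D_def using fin_alpha start_R g_range f_range closed_R by auto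
  moreover have "lang D = lang P"
  proof -
    have D_parts: "start D = g (start P)" "final D = {i \<in> {0..<card R}. f i \<in> final P}"
        "alphabet D = alphabet P"
      by (simp_all add: D_def)
    have "trans_star D (start D) w \<in> final D \<longleftrightarrow> trans_star P (start P) w \<in> final P"
      if "w \<in> lists (alphabet P)" for w
      using simulate[OF start_R that] unfolding D_parts by auto
    then show ?thesis unfolding lang_def D_parts by auto
  qed
  ultimately show ?thesis by (intro exI[of _ D]) (simp add: D_def)
qed

lemma kstar_snoc: "u \<in> kstar L \<Longrightarrow> v \<in> L \<Longrightarrow> u @ v \<in> kstar L"
proof (induction rule: kstar.induct)
  case kstar_Nil
  then show ?case using kstar.kstar_app[OF _ kstar.kstar_Nil, of v L] by simp
next
  case (kstar_app u w)
  then show ?case using kstar.kstar_app[of u L "w @ v"] by simp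
qed

lemma kstar_last_factor:
  "w \<in> kstar L \<Longrightarrow> w \<noteq> [] \<Longrightarrow> \<exists>u v. w = u @ v \<and> u \<in> kstar L \<and> v \<in> L \<and> v \<noteq> []"
proof (induction rule: kstar.induct)
  case kstar_Nil
  then show ?case by simp
next
  case (kstar_app u1 v1)
  show ?case
  proof (cases "v1 = []")
    case True
    then show ?thesis using kstar_app kstar.kstar_Nil by (intro exI[of _ "[]"] exI[of _ u1]) auto
  next
    case False
    then obtain u' v' where "v1 = u' @ v'" "u' \<in> kstar L" "v' \<in> L" "v' \<noteq> []"
      using kstar_app by blast
    then show ?thesis
      using kstar_app kstar.kstar_app[of u1 L u'] by (intro exI[of _ "u1 @ u'"] exI[of _ v']) auto
  qed
qed

section \<open>The subset construction for the star\<close>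

definition Sw :: "('q, 'a) dfa \<Rightarrow> 'a list \<Rightarrow> 'q set" where
  "Sw M w = {trans_star M (start M) v | u v. w = u @ v \<and> u \<in> kstar (lang M)}"

lemma Sw_Nil: "Sw M [] = {start M}"
  by (auto simp: Sw_def intro: kstar.kstar_Nil)

lemma start_in_Sw: "w \<in> kstar (lang M) \<Longrightarrow> start M \<in> Sw M w"
  unfolding Sw_def by (rule CollectI, rule exI[of _ w], rule exI[of _ "[]"]) simp

lemma run_in_Sw: "trans_star M (start M) w \<in> Sw M w"
proof -
  have "trans_star M (start M) w = trans_star M (start M) w \<and> w = [] @ w \<and> [] \<in> kstar (lang M)"
    by (simp add: kstar.kstar_Nil)
  then show ?thesis unfolding Sw_def by blast
qed

lemma Sw_meets_final:
  assumes "w \<in> lists (alphabet M)"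
  shows "Sw M w \<inter> final M \<noteq> {} \<longleftrightarrow> (\<exists>u v. w = u @ v \<and> u \<in> kstar (lang M) \<and> v \<in> lang M)"
  using assms by (fastforce simp: Sw_def lang_def)

lemma Sw_meets_final_iff_kstar:
  assumes "w \<in> lists (alphabet M)" "w \<noteq> []"
  shows "Sw M w \<inter> final M \<noteq> {} \<longleftrightarrow> w \<in> kstar (lang M)"
  unfolding Sw_meets_final[OF assms(1)]
  using kstar_snoc kstar_last_factor[of w "lang M"] assms(2) by blast

lemma Sw_snoc:
  "Sw M (w @ [a]) = (\<lambda>q. trans M q a) ` Sw M w \<union> (if w @ [a] \<in> kstar (lang M) then {start M} else {})"
proof (intro set_eqI iffI)
  fix x assume "x \<in> Sw M (w @ [a])"
  then obtain u v' where x: "x = trans_star M (start M) v'" and uv': "w @ [a] = u @ v'"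
    and u: "u \<in> kstar (lang M)" by (auto simp: Sw_def)
  show "x \<in> (\<lambda>q. trans M q a) ` Sw M w \<union> (if w @ [a] \<in> kstar (lang M) then {start M} else {})"
  proof (cases v' rule: rev_cases)
    case Nil
    then show ?thesis using x uv' u by simp
  next
    case (snoc v b)
    then have "w = u @ v" "x = trans M (trans_star M (start M) v) a"
      using x uv' by (simp_all add: trans_star_snoc)
    then show ?thesis using u by (auto simp: Sw_def)
  qed
next
  fix x assume "x \<in> (\<lambda>q. trans M q a) ` Sw M w \<union> (if w @ [a] \<in> kstar (lang M) then {start M} else {})"
  then consider (moved) u v where "x = trans M (trans_star M (start M) v) a" "w = u @ v"
      "u \<in> kstar (lang M)"
    | (restart) "x = start M" "w @ [a] \<in> kstar (lang M)"
    by (auto simp: Sw_def split: if_splits)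
  then show "x \<in> Sw M (w @ [a])"
  proof cases
    case moved
    then have "x = trans_star M (start M) (v @ [a]) \<and> w @ [a] = u @ (v @ [a])"
      by (simp add: trans_star_snoc)
    then show ?thesis using moved(3) unfolding Sw_def by blast
  next
    case restart
    then show ?thesis using start_in_Sw by metis
  qed
qed

lemma moved_Sw_meets_final:
  assumes "w @ [a] \<in> lists (alphabet M)"
  shows "(\<lambda>q. trans M q a) ` Sw M w \<inter> final M \<noteq> {} \<longleftrightarrow> w @ [a] \<in> kstar (lang M)"
proof
  assume "(\<lambda>q. trans M q a) ` Sw M w \<inter> final M \<noteq> {}"
  then obtain u v where "w = u @ v" "u \<in> kstar (lang M)" "trans_star M (start M) (v @ [a]) \<in> final M"
    by (auto simp: Sw_def trans_star_snoc)
  moreover from this assms have "v @ [a] \<in> lang M" by (simp add: lang_def)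
  ultimately show "w @ [a] \<in> kstar (lang M)" using kstar_snoc by fastforce
next
  assume "w @ [a] \<in> kstar (lang M)"
  then obtain u v' where uv': "w @ [a] = u @ v'" "u \<in> kstar (lang M)" "v' \<in> lang M" "v' \<noteq> []"
    using kstar_last_factor by blast
  then obtain v where v: "v' = v @ [a]" "w = u @ v" by (cases v' rule: rev_cases) auto
  then have "trans M (trans_star M (start M) v) a \<in> final M"
    using uv'(3) by (simp add: lang_def trans_star_snoc)
  moreover have "trans_star M (start M) v \<in> Sw M w" using v(2) uv'(2) by (auto simp: Sw_def)
  ultimately show "(\<lambda>q. trans M q a) ` Sw M w \<inter> final M \<noteq> {}" by blast
qed

definition star_step :: "('q, 'a) dfa \<Rightarrow> 'q set \<Rightarrow> 'a \<Rightarrow> 'q set" where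
  "star_step M S a = (let T = (\<lambda>q. trans M q a) ` S in
     if T \<inter> final M \<noteq> {} then insert (start M) T else T)"

lemma star_step_Sw:
  assumes "w @ [a] \<in> lists (alphabet M)"
  shows "star_step M (Sw M w) a = Sw M (w @ [a])"
  using moved_Sw_meets_final[OF assms] by (auto simp: star_step_def Sw_snoc)

section \<open>The product of the star automaton with N\<close>

(* None is the initial star state standing for {s}; it is accepting (for the empty
   word) independently of whether s is final. *)
definition star_set :: "('q, 'a) dfa \<Rightarrow> 'q set option \<Rightarrow> 'q set" where
  "star_set M X = (case X of None \<Rightarrow> {start M} | Some S \<Rightarrow> S)"

definition star_prod :: "('q, 'a) dfa \<Rightarrow> ('p, 'a) dfa \<Rightarrow> ('q set option \<times> 'p, 'a) dfa" where
  "star_prod M N = \<lparr>states = UNIV, alphabet = alphabet M,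
     trans = (\<lambda>(X, p) a. (Some (star_step M (star_set M X) a), trans N p a)),
     start = (None, start N),
     final = {(X, p). p \<in> final N \<and> (case X of None \<Rightarrow> True | Some S \<Rightarrow> S \<inter> final M \<noteq> {})}\<rparr>"

lemma star_prod_run:
  "w \<in> lists (alphabet M) \<Longrightarrow> trans_star (star_prod M N) (start (star_prod M N)) w =
     (if w = [] then None else Some (Sw M w), trans_star N (start N) w)"
proof (induction w rule: rev_induct)
  case Nil
  then show ?case by (simp add: star_prod_def)
next
  case (snoc a w)
  have "star_set M (if w = [] then None else Some (Sw M w)) = Sw M w"
    by (simp add: star_set_def Sw_Nil)
  then show ?case
    using snoc star_step_Sw[OF snoc.prems] by (simp add: trans_star_snoc star_prod_def)
qed

lemma star_prod_lang:
  assumes "alphabet N = alphabet M"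
  shows "lang (star_prod M N) = kstar (lang M) \<inter> lang N"
proof -
  have alpha: "alphabet (star_prod M N) = alphabet M" by (simp add: star_prod_def)
  have "trans_star (star_prod M N) (start (star_prod M N)) w \<in> final (star_prod M N) \<longleftrightarrow>
      w \<in> kstar (lang M) \<and> trans_star N (start N) w \<in> final N" if w: "w \<in> lists (alphabet M)" for w
    using star_prod_run[OF w, of N] Sw_meets_final_iff_kstar[OF w]
    by (cases "w = []") (auto simp: star_prod_def intro: kstar.kstar_Nil)
  then show ?thesis using assms unfolding lang_def alpha by blast
qed

section \<open>Counting the reachable states\<close>

definition admissible :: "('q, 'a) dfa \<Rightarrow> 'q set set" where
  "admissible M = {S. S \<subseteq> states M \<and> S \<noteq> {} \<and> (S \<inter> final M \<noteq> {} \<longrightarrow> start M \<in> S)}"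

lemma Sw_admissible:
  assumes "complete_dfa M" "w \<in> lists (alphabet M)"
  shows "Sw M w \<in> admissible M"
proof -
  have "Sw M w \<subseteq> states M"
  proof
    fix x assume "x \<in> Sw M w"
    then obtain u v where "x = trans_star M (start M) v" "w = u @ v" by (auto simp: Sw_def)
    then show "x \<in> states M"
      using assms trans_star_in_states[OF assms(1), of "start M" v] by (simp add: complete_dfa_def)
  qed
  moreover have "trans_star M (start M) w \<in> Sw M w" by (rule run_in_Sw)
  moreover have "start M \<in> Sw M w" if "Sw M w \<inter> final M \<noteq> {}"
  proof -
    have "\<exists>u v. w = u @ v \<and> u \<in> kstar (lang M) \<and> v \<in> lang M"
      using that Sw_meets_final[OF assms(2)] by simp
    then obtain u v where "w = u @ v" "u \<in> kstar (lang M)" "v \<in> lang M" by blast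
    then have "w \<in> kstar (lang M)" using kstar_snoc by blast
    then show ?thesis by (rule start_in_Sw)
  qed
  ultimately show ?thesis by (auto simp: admissible_def)
qed

(* An admissible set either contains s, or avoids both s and F and is nonempty. *)
lemma card_admissible:
  fixes M :: "('q, 'a) dfa"
  defines "Q \<equiv> states M" and "F \<equiv> final M"
  assumes "finite Q" "start M \<in> Q" "F \<subseteq> Q"
  shows "card (admissible M) \<le> 2 ^ (card Q - 1) + (2 ^ (card Q - 1 - card (F - {start M})) - 1)"
proof -
  let ?s = "start M"
  let ?with_s = "insert ?s ` Pow (Q - {?s})"
  let ?without_s = "Pow (Q - {?s} - (F - {?s})) - {{}}"
  have "admissible M \<subseteq> ?with_s \<union> ?without_s"
  proof
    fix S assume S: "S \<in> admissible M"
    show "S \<in> ?with_s \<union> ?without_s"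
    proof (cases "?s \<in> S")
      case True
      then have "S = insert ?s (S - {?s})" by auto
      moreover have "S - {?s} \<in> Pow (Q - {?s})" using S by (auto simp: admissible_def Q_def)
      ultimately show ?thesis by (metis UnI1 image_eqI)
    next
      case False
      then show ?thesis using S by (auto simp: admissible_def Q_def F_def)
    qed
  qed
  then have "card (admissible M) \<le> card (?with_s \<union> ?without_s)"
    using assms(3) by (intro card_mono) auto
  also have "\<dots> \<le> card ?with_s + card ?without_s" by (rule card_Un_le)
  finally have "card (admissible M) \<le> card ?with_s + card ?without_s" .
  moreover have "card ?with_s \<le> 2 ^ (card Q - 1)"
    using card_image_le[of "Pow (Q - {?s})" "insert ?s"] assms(3,4) by (simp add: card_Pow)
  moreover have "card (Q - {?s} - (F - {?s})) = card Q - 1 - card (F - {?s})"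
    using assms(3-5) by (simp add: card_Diff_subset finite_subset Diff_mono)
  then have "card ?without_s = 2 ^ (card Q - 1 - card (F - {?s})) - 1"
    using assms(3) by (simp add: card_Pow)
  ultimately show ?thesis by linarith
qed

definition star_prod_states :: "('q, 'a) dfa \<Rightarrow> ('p, 'a) dfa \<Rightarrow> ('q set option \<times> 'p) set" where
  "star_prod_states M N = insert (None, start N) (Some ` admissible M \<times> states N)"

lemma reachable_star_prod:
  assumes "complete_dfa M" "complete_dfa N" "alphabet N = alphabet M"
  shows "reachable (star_prod M N) \<subseteq> star_prod_states M N"
proof
  fix x assume "x \<in> reachable (star_prod M N)"
  then obtain w where w: "w \<in> lists (alphabet M)" "x = trans_star (star_prod M N) (start (star_prod M N)) w"
    by (auto simp: reachable_def star_prod_def)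
  have "trans_star N (start N) w \<in> states N"
    using trans_star_in_states[OF assms(2), of "start N" w] assms(2,3) w(1) by (auto simp: complete_dfa_def)
  then show "x \<in> star_prod_states M N"
    using w star_prod_run[OF w(1), of N] Sw_admissible[OF assms(1) w(1)]
    by (auto simp: star_prod_states_def)
qed

lemma finite_admissible: "finite (states M) \<Longrightarrow> finite (admissible M)"
  by (auto simp: admissible_def intro: finite_subset[of _ "Pow (states M)"])

lemma finite_star_prod_states:
  "finite (states M) \<Longrightarrow> finite (states N) \<Longrightarrow> finite (star_prod_states M N)"
  by (simp add: star_prod_states_def finite_admissible)

lemma card_star_prod_states:
  assumes "finite (states M)" "finite (states N)"
  shows "card (star_prod_states M N) \<le> card (admissible M) * card (states N) + 1"
  using assms finite_admissible[OF assms(1)]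
  by (simp add: star_prod_states_def card_insert_if card_cartesian_product card_image)

theorem theorem4:
  fixes M :: "('q, 'a) dfa" and N :: "('p, 'a) dfa"
  assumes "complete_dfa M" and "complete_dfa N"
    and "alphabet N = alphabet M"
    and "card (states M) \<ge> 2" and "card (states N) \<ge> 1"
    and "card (final M - {start M}) \<ge> 1"
  shows "\<exists>D :: (nat, 'a) dfa. complete_dfa D \<and> alphabet D = alphabet M \<and>
           card (states D) \<le>
             (2 ^ (card (states M) - 1) + 2 ^ (card (states M) - card (final M - {start M}) - 1))
               * card (states N) - card (states N) + 1 \<and>
           lang D = kstar (lang M) \<inter> lang N"
proof -
  let ?R = "reachable (star_prod M N)" and ?k = "card (final M - {start M})"
  let ?a = "2 ^ (card (states M) - 1) + (2 ^ (card (states M) - 1 - ?k) - 1)"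
  have fin: "finite (states M)" "finite (states N)" "finite (alphabet M)"
    and s_Q: "start M \<in> states M" and F_Q: "final M \<subseteq> states M"
    using assms(1,2) by (auto simp: complete_dfa_def)
  have R_sub: "?R \<subseteq> star_prod_states M N" by (rule reachable_star_prod[OF assms(1-3)])
  have fin_R: "finite ?R" using finite_subset[OF R_sub finite_star_prod_states[OF fin(1,2)]] .
  have "card ?R \<le> card (star_prod_states M N)"
    using card_mono[OF finite_star_prod_states[OF fin(1,2)] R_sub] .
  also have "\<dots> \<le> card (admissible M) * card (states N) + 1"
    using card_star_prod_states[OF fin(1,2)] .
  also have "\<dots> \<le> ?a * card (states N) + 1"
    using card_admissible[OF fin(1) s_Q F_Q] by simp
  also have "\<dots> = (2 ^ (card (states M) - 1) + 2 ^ (card (states M) - ?k - 1))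
                    * card (states N) - card (states N) + 1"
    by (simp add: diff_mult_distrib)
  finally have bound: "card ?R \<le> \<dots>" .
  obtain D :: "(nat, 'a) dfa" where "complete_dfa D" "alphabet D = alphabet M"
      "card (states D) = card ?R" "lang D = kstar (lang M) \<inter> lang N"
    using dfa_restrict_to_nat[OF fin_R start_reachable] reachable_closed
      star_prod_lang[OF assms(3)] fin(3)
    by (fastforce simp: star_prod_def)
  then show ?thesis using bound by (intro exI[of _ D]) auto
qed

end
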